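(* Let $k\ge1$, let $\mathbf f\in[L^2(\Omega)]^d$, and let $(\underline{\mathbf u}_h,p_h)\in\underline{\mathbf V}_{h,0}^k\times Q_{h,0}^{k-1}$, $\underline{\mathbf u}_h=(\mathbf u_h,\widehat{\mathbf u}_h)$, solve $$a(\underline{\mathbf u}_h,\underline{\mathbf v}_h)+b(p_h,\mathbf v_h)=(\mathbf f,\mathbf v_h)_{\mathcal T_h},\qquad b(\mathbf u_h,q_h)+c(p_h,q_h)=0$$ for all $(\underline{\mathbf v}_h,q_h)\in\underline{\mathbf V}_{h,0}^k\times Q_{h,0}^{k-1}$. Write $\mathbf u_h=\mathbf u_h^\partial+\mathbf u_h^o$ with $\mathbf u_h^\partial\in\mathbf V_{h,0}^{k,\partial}$, $\mathbf u_h^o\in\mathbf V_{h}^{k,o}$, and $p_h=\overline p_h+p_h^o$ with $\overline p_h\in\overline Q_h$, $p_h^o\in Q_h^{k-1,o}$. Then $$b(p_h^o,\mathbf v_h^o)=\lambda(\nabla\cdot\mathbf u_h^o,\nabla\cdot\mathbf v_h^o)_{\mathcal T_h}\qquad\text{for all }\mathbf v_h^o\in\mathbf V_h^{k,o}.$$ (Equivalently, in matrix form with respect to fixed bases, $\mathbf B_{u^op^o}\mathbf P^o=\mathbf D_{u^ou^o}\mathbf U^o$, where $\langle\mathbf D_{u^ou^o}\mathbf U^o,\mathbf V^o\rangle_2=\lambda(\nabla\cdot\mathbf u_h^o,\nabla\cdot\mathbf v_h^o)_{\mathcal T_h}$ and $\langle \mathbf B_{u^op^o}\mathbf P^o,\mathbf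 V^o\rangle_2=b(p_h^o,\mathbf v_h^o)$.)
   Context: $\Omega\subset\mathbb R^d$ ($d=2,3$) is a convex polygonal/polyhedral domain, $\mathcal T_h$ a shape-regular, quasi-uniform, conforming simplicial triangulation with mesh size $h$ (maximal element diameter), $\mathcal E_h$ its set of facets, $\mathcal E_h^\partial$ the facets on $\partial\Omega$. $\mathbf n$ denotes a unit normal (outward on $\partial K$), $\mathsf{tang}(\mathbf w)=\mathbf w-(\mathbf w\cdot\mathbf n)\mathbf n$, $\mathbf D(\mathbf u)=\frac12(\nabla\mathbf u+\nabla\mathbf u^T)$. $(\cdot,\cdot)_{\mathcal T_h}=\sum_K(\cdot,\cdot)_{L^2(K)}$, $\langle\cdot,\cdot\rangle_{\partial K}$ the $L^2(\partial K)$ product. $\mathcal P^m(S)$ = polynomials of degree $\le m$ on $S$. Spaces: $\mathbf V_h^k=\{\mathbf v\in H(\mathrm{div};\Omega):\mathbf v|_K\in[\mathcal P^k(K)]^d\ \forall K\}$; $\mathbf V_{h,0}^k=\{\mathbf v\in\mathbf V_h^k:\mathbf v\cdot\mathbf n=0\text{ on every }F\in\mathcal E_h^\partial\}$; for $m\ge0$, $\widehat{\mathbf V}_h^m=\{\widehat{\mathbf v}\in[L^2(\mathcal E_h)]^d:\widehat{\mathbf v}|_F\in[\mathcal P^m(F)]^d,\ \widehat{\mathbf v}\cdot\mathbf n|_F=0\ \forall F\}$, except that for $m=1,d=3$ it is $\{\widehat{\mathbf v}:\widehat{\mathbf v}|_F\in[\mathcal P^0(F)]^3\oplus\mathbf x\times[\mathcal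 P^0(F)]^3\ \forall F\}$; $\widehat{\mathbf V}_{h,0}^m=\{\widehat{\mathbf v}\in\widehat{\mathbf V}_h^m:\mathsf{tang}(\widehat{\mathbf v})=0\text{ on }\mathcal E_h^\partial\}$; $Q_h^m$ = piecewise $\mathcal P^m$ functions, $Q_{h,0}^m$ those with zero mean on $\Omega$, $\overline Q_h=Q_h^0$, $Q_h^{m,o}=\{q\in Q_h^m:(q,1)_K=0\ \forall K\}$. $\mathbf V_h^k=\mathbf V_h^{k,\partial}\oplus\mathbf V_h^{k,o}$ is the hierarchical splitting where $\mathbf V_h^{k,o}$ is spanned by element-supported basis functions with zero normal component on all facets, and $\mathbf V_h^{k,\partial}$ by the lowest-order Raviart–Thomas facet basis functions and divergence-free facet bubbles (normal component supported on one facet); it satisfies $\nabla\cdot\mathbf V_h^{k,\partial}=\overline Q_h$, $\nabla\cdot\mathbf V_h^{k,o}=Q_h^{k-1,o}$. $\mathbf V_{h,0}^{k,\partial}$ is the subspace of $\mathbf V_h^{k,\partial}$ of functions in $\mathbf V_{h,0}^k$. $\underline{\mathbf V}_{h,0}^k=\mathbf V_{h,0}^k\times\widehat{\mathbf V}_{h,0}^{k-1}$, elements $\underline{\mathbf v}_h=(\mathbf v_h,\widehat{\mathbf v}_h)$. Parameters $\mu>0$, $0<\lambda<\infty$, $\tau\ge0$ constants; $\alpha>0$ a stabilization parameter; $P_{k-1}$ is the $L^2$ projection onto $\widehat{\mathbf V}_{h,0}^{k-1}$. Forms: $a(\underline{\mathbf u},\underline{\mathbf v})=\sum_K\Big[\tau(\mathbf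 u,\mathbf v)_K+2\mu\Big((\mathbf D(\mathbf u):\mathbf D(\mathbf v))_K-\langle\mathbf D(\mathbf u)\mathbf n,\mathsf{tang}(\mathbf v-\widehat{\mathbf v})\rangle_{\partial K}-\langle\mathbf D(\mathbf v)\mathbf n,\mathsf{tang}(\mathbf u-\widehat{\mathbf u})\rangle_{\partial K}+\langle\tfrac{\alpha k^2}{h}P_{k-1}\mathsf{tang}(\mathbf u-\widehat{\mathbf u}),P_{k-1}\mathsf{tang}(\mathbf v-\widehat{\mathbf v})\rangle_{\partial K}\Big)\Big]$, $b(p,\mathbf v)=-(p,\nabla\cdot\mathbf v)_{\mathcal T_h}$, $c(p,q)=-\frac1\lambda(p,q)_{\mathcal T_h}$. *)

theory Defs
  imports "HOL-Analysis.Analysis"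
begin

definition convex_polytopal_domain :: "'a::euclidean_space set \<Rightarrow> bool" where
  "convex_polytopal_domain \<Omega> \<longleftrightarrow>
     (DIM('a) = 2 \<or> DIM('a) = 3) \<and> polytope \<Omega> \<and> convex \<Omega> \<and> interior \<Omega> \<noteq> {}"

definition conforming_triangulation :: "'a::euclidean_space set set \<Rightarrow> 'a set \<Rightarrow> bool" where
  "conforming_triangulation T \<Omega> \<longleftrightarrow>
     finite T \<and> T \<noteq> {} \<and> (\<forall>K\<in>T. int DIM('a) simplex K) \<and> \<Union>T = \<Omega> \<and>
     (\<forall>K1\<in>T. \<forall>K2\<in>T. K1 \<inter> K2 = {} \<or> ((K1 \<inter> K2) face_of K1 \<and> (K1 \<inter> K2) face_of K2))"

definition meshsize :: "'a::euclidean_space set set \<Rightarrow> real" where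
  "meshsize T = Max (diameter ` T)"

definition facets :: "'a::euclidean_space set set \<Rightarrow> 'a set set" where
  "facets T = {F. \<exists>K\<in>T. F facet_of K}"

definition bfacets :: "'a::euclidean_space set set \<Rightarrow> 'a set \<Rightarrow> 'a set set" where
  "bfacets T \<Omega> = {F \<in> facets T. F \<subseteq> frontier \<Omega>}"

definition fnormal :: "'a::euclidean_space set \<Rightarrow> 'a" where
  "fnormal F = (SOME n. norm n = 1 \<and> (\<forall>x\<in>F. \<forall>y\<in>F. (x - y) \<bullet> n = 0))"

definition onormal :: "'a::euclidean_space set \<Rightarrow> 'a set \<Rightarrow> 'a" where
  "onormal K F = (SOME n. norm n = 1 \<and> (\<forall>x\<in>F. \<forall>y\<in>F. (x - y) \<bullet> n = 0)
                          \<and> (\<forall>x\<in>F. \<forall>y\<in>K. (y - x) \<bullet> n \<le> 0))"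

definition tang :: "'a::euclidean_space set \<Rightarrow> 'a \<Rightarrow> 'a" where
  "tang F w = w - (w \<bullet> fnormal F) *\<^sub>R fnormal F"

abbreviation vint :: "'a::euclidean_space set \<Rightarrow> ('a \<Rightarrow> real) \<Rightarrow> real" where
  "vint K g \<equiv> (LINT x:K|lborel. g x)"

text \<open>Surface integral over a flat facet F (with respect to (d-1)-dimensional surface
  measure).  By Fubini in orthonormal coordinates adapted to F, it equals the volume
  integral over the prism F + [0,1] n_F of g composed with the orthogonal projection onto
  the affine hull of F.\<close>
definition fprism :: "'a::euclidean_space set \<Rightarrow> 'a set" where
  "fprism F = {y + t *\<^sub>R fnormal F | y t. y \<in> F \<and> 0 \<le> t \<and> t \<le> 1}"

definition fproj :: "'a::euclidean_space set \<Rightarrow> 'a \<Rightarrow> 'a" where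
  "fproj F x = x - ((x - (SOME p. p \<in> F)) \<bullet> fnormal F) *\<^sub>R fnormal F"

definition fint :: "'a::euclidean_space set \<Rightarrow> ('a \<Rightarrow> real) \<Rightarrow> real" where
  "fint F g = (LINT x:fprism F|lborel. g (fproj F x))"

definition mindex :: "nat \<Rightarrow> ('a::euclidean_space \<Rightarrow> nat) set" where
  "mindex m = {\<alpha>. (\<forall>b. b \<notin> Basis \<longrightarrow> \<alpha> b = 0) \<and> sum \<alpha> Basis \<le> m}"

definition poly_fun :: "nat \<Rightarrow> ('a::euclidean_space \<Rightarrow> real) \<Rightarrow> bool" where
  "poly_fun m f \<longleftrightarrow> (\<exists>c. \<forall>x. f x = (\<Sum>\<alpha>\<in>mindex m. c \<alpha> * (\<Prod>b\<in>Basis. (x \<bullet> b) ^ \<alpha> b)))"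

definition vpoly :: "nat \<Rightarrow> ('a::euclidean_space \<Rightarrow> 'a) \<Rightarrow> bool" where
  "vpoly m v \<longleftrightarrow> (\<forall>b\<in>Basis. poly_fun m (\<lambda>x. v x \<bullet> b))"

definition vgrad :: "('a::euclidean_space \<Rightarrow> 'a) \<Rightarrow> 'a \<Rightarrow> 'a \<Rightarrow> 'a" where
  "vgrad v x = frechet_derivative v (at x)"

definition vdiv :: "('a::euclidean_space \<Rightarrow> 'a) \<Rightarrow> 'a \<Rightarrow> real" where
  "vdiv v x = (\<Sum>b\<in>Basis. vgrad v x b \<bullet> b)"

definition ladj :: "('a::euclidean_space \<Rightarrow> 'a) \<Rightarrow> 'a \<Rightarrow> 'a" where
  "ladj A w = (\<Sum>b\<in>Basis. (A b \<bullet> w) *\<^sub>R b)"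

definition symgrad :: "('a::euclidean_space \<Rightarrow> 'a) \<Rightarrow> 'a \<Rightarrow> 'a \<Rightarrow> 'a" where
  "symgrad v x w = (1/2) *\<^sub>R (vgrad v x w + ladj (vgrad v x) w)"

definition ddot :: "('a::euclidean_space \<Rightarrow> 'a) \<Rightarrow> ('a \<Rightarrow> 'a) \<Rightarrow> real" where
  "ddot A B = (\<Sum>b\<in>Basis. A b \<bullet> B b)"

text \<open>Broken (element-wise) functions are represented as families indexed by elements:
  u K is the polynomial representing u on the element K.  Facet functions are families
  indexed by facets.\<close>

type_synonym 'a bvec = "'a set \<Rightarrow> 'a \<Rightarrow> 'a"
type_synonym 'a bscal = "'a set \<Rightarrow> 'a \<Rightarrow> real"

definition hdiv_conf :: "'a::euclidean_space set set \<Rightarrow> 'a bvec \<Rightarrow> bool" where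
  "hdiv_conf T u \<longleftrightarrow> (\<forall>K1\<in>T. \<forall>K2\<in>T. \<forall>F. F facet_of K1 \<and> F facet_of K2 \<and> K1 \<noteq> K2 \<longrightarrow>
      (\<forall>x\<in>F. (u K1 x - u K2 x) \<bullet> fnormal F = 0))"

definition Vh :: "'a::euclidean_space set set \<Rightarrow> nat \<Rightarrow> 'a bvec set" where
  "Vh T k = {u. (\<forall>K\<in>T. vpoly k (u K)) \<and> hdiv_conf T u}"

definition Vh0 :: "'a::euclidean_space set set \<Rightarrow> 'a set \<Rightarrow> nat \<Rightarrow> 'a bvec set" where
  "Vh0 T \<Omega> k = {u \<in> Vh T k. \<forall>K\<in>T. \<forall>F. F facet_of K \<and> F \<in> bfacets T \<Omega> \<longrightarrow>
                      (\<forall>x\<in>F. u K x \<bullet> fnormal F = 0)}"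

definition hat_local :: "nat \<Rightarrow> 'a::euclidean_space set \<Rightarrow> ('a \<Rightarrow> 'a) \<Rightarrow> bool" where
  "hat_local m F w \<longleftrightarrow>
     (if m = 1 \<and> DIM('a) = 3 then
        (\<exists>c W. linear W \<and> (\<forall>x y. W x \<bullet> y = - (x \<bullet> W y)) \<and> (\<forall>x\<in>F. w x = c + W x))
      else
        (\<exists>q. vpoly m q \<and> (\<forall>x\<in>F. w x = q x)) \<and> (\<forall>x\<in>F. w x \<bullet> fnormal F = 0))"

definition hatVh :: "'a::euclidean_space set set \<Rightarrow> nat \<Rightarrow> 'a bvec set" where
  "hatVh T m = {w. \<forall>F\<in>facets T. hat_local m F (w F)}"

definition hatVh0 :: "'a::euclidean_space set set \<Rightarrow> 'a set \<Rightarrow> nat \<Rightarrow> 'a bvec set" where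
  "hatVh0 T \<Omega> m = {w \<in> hatVh T m. \<forall>F\<in>bfacets T \<Omega>. \<forall>x\<in>F. tang F (w F x) = 0}"

definition Qh :: "'a::euclidean_space set set \<Rightarrow> nat \<Rightarrow> 'a bscal set" where
  "Qh T m = {p. \<forall>K\<in>T. poly_fun m (p K)}"

definition Qh0 :: "'a::euclidean_space set set \<Rightarrow> nat \<Rightarrow> 'a bscal set" where
  "Qh0 T m = {p \<in> Qh T m. (\<Sum>K\<in>T. vint K (p K)) = 0}"

definition Qho :: "'a::euclidean_space set set \<Rightarrow> nat \<Rightarrow> 'a bscal set" where
  "Qho T m = {p \<in> Qh T m. \<forall>K\<in>T. vint K (p K) = 0}"

text \<open>V_h^{k,o}: functions of V_h^k with vanishing normal component on every facet
  (the span of the element-supported basis functions).\<close>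
definition Vho :: "'a::euclidean_space set set \<Rightarrow> nat \<Rightarrow> 'a bvec set" where
  "Vho T k = {u \<in> Vh T k. \<forall>K\<in>T. \<forall>F. F facet_of K \<longrightarrow> (\<forall>x\<in>F. u K x \<bullet> fnormal F = 0)}"

definition RT0 :: "'a::euclidean_space set set \<Rightarrow> 'a bvec set" where
  "RT0 T = {u \<in> Vh T 1. \<forall>K\<in>T. \<exists>a c. \<forall>x. u K x = a + c *\<^sub>R x}"

definition fspan :: "'a bvec set \<Rightarrow> 'a::euclidean_space bvec set" where
  "fspan B = {w. \<exists>S c. finite S \<and> S \<subseteq> B \<and> w = (\<lambda>K x. \<Sum>\<phi>\<in>S. c \<phi> *\<^sub>R \<phi> K x)}"

definition eqT :: "'a::euclidean_space set set \<Rightarrow> ('a set \<Rightarrow> 'a \<Rightarrow> 'b) \<Rightarrow> ('a set \<Rightarrow> 'a \<Rightarrow> 'b) \<Rightarrow> bool" where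
  "eqT T u v \<longleftrightarrow> (\<forall>K\<in>T. \<forall>x\<in>K. u K x = v K x)"

text \<open>The hierarchical splitting V_h^k = V_h^{k,\<partial>} (+) V_h^{k,o}: Vd is spanned by the RT0
  functions and by (piecewise) divergence-free facet bubbles (normal component supported on
  one facet); the sum is direct; and, as recorded in the paper,
  div V_h^{k,\<partial>} = Q_h^0 and div V_h^{k,o} = Q_h^{k-1,o}.\<close>
definition hier_split :: "'a::euclidean_space set set \<Rightarrow> nat \<Rightarrow> 'a bvec set \<Rightarrow> bool" where
  "hier_split T k Vd \<longleftrightarrow>
     (\<exists>B. (\<forall>w\<in>B. w \<in> Vh T k \<and> (\<forall>K\<in>T. \<forall>x. vdiv (w K) x = 0) \<and>
               (\<exists>F\<in>facets T. \<forall>K\<in>T. \<forall>G. G facet_of K \<and> G \<noteq> F \<longrightarrow>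
                   (\<forall>x\<in>G. w K x \<bullet> fnormal G = 0)))
          \<and> Vd = fspan (RT0 T \<union> B))
     \<and> Vd \<subseteq> Vh T k
     \<and> (\<forall>u\<in>Vh T k. \<exists>ud\<in>Vd. \<exists>uo\<in>Vho T k. eqT T u (\<lambda>K x. ud K x + uo K x))
     \<and> (\<forall>ud\<in>Vd. \<forall>uo\<in>Vho T k. eqT T (\<lambda>K x. ud K x + uo K x) (\<lambda>K x. 0) \<longrightarrow>
           eqT T ud (\<lambda>K x. 0) \<and> eqT T uo (\<lambda>K x. 0))
     \<and> (\<forall>ud\<in>Vd. (\<lambda>K x. vdiv (ud K) x) \<in> Qh T 0)
     \<and> (\<forall>q\<in>Qh T 0. \<exists>ud\<in>Vd. eqT T (\<lambda>K x. vdiv (ud K) x) q)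
     \<and> (\<forall>uo\<in>Vho T k. (\<lambda>K x. vdiv (uo K) x) \<in> Qho T (k - 1))
     \<and> (\<forall>q\<in>Qho T (k - 1). \<exists>uo\<in>Vho T k. eqT T (\<lambda>K x. vdiv (uo K) x) q)"

definition Vh0d :: "'a::euclidean_space set set \<Rightarrow> 'a set \<Rightarrow> nat \<Rightarrow> 'a bvec set \<Rightarrow> 'a bvec set" where
  "Vh0d T \<Omega> k Vd = Vd \<inter> Vh0 T \<Omega> k"

definition Pproj :: "nat \<Rightarrow> 'a::euclidean_space set \<Rightarrow> ('a \<Rightarrow> 'a) \<Rightarrow> 'a \<Rightarrow> 'a" where
  "Pproj m F w = (SOME p. hat_local m F p \<and>
      (\<forall>q. hat_local m F q \<longrightarrow> fint F (\<lambda>x. (w x - p x) \<bullet> q x) = 0))"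

definition aform ::
  "'a::euclidean_space set set \<Rightarrow> nat \<Rightarrow> real \<Rightarrow> real \<Rightarrow> real \<Rightarrow>
   ('a bvec \<times> 'a bvec) \<Rightarrow> ('a bvec \<times> 'a bvec) \<Rightarrow> real" where
  "aform T k \<tau> \<mu> \<alpha> U V = (case U of (u, uh) \<Rightarrow> case V of (v, vh) \<Rightarrow>
     (\<Sum>K\<in>T. \<tau> * vint K (\<lambda>x. u K x \<bullet> v K x)
       + 2 * \<mu> * (vint K (\<lambda>x. ddot (symgrad (u K) x) (symgrad (v K) x))
          - (\<Sum>F\<in>{F. F facet_of K}. fint F (\<lambda>x. symgrad (u K) x (onormal K F) \<bullet> tang F (v K x - vh F x)))
          - (\<Sum>F\<in>{F. F facet_of K}. fint F (\<lambda>x. symgrad (v K) x (onormal K F) \<bullet> tang F (u K x - uh F x)))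
          + (\<Sum>F\<in>{F. F facet_of K}. fint F (\<lambda>x. (\<alpha> * (real k)^2 / meshsize T) *
               (Pproj (k - 1) F (\<lambda>y. tang F (u K y - uh F y)) x
                 \<bullet> Pproj (k - 1) F (\<lambda>y. tang F (v K y - vh F y)) x))))))"

definition bform :: "'a::euclidean_space set set \<Rightarrow> 'a bscal \<Rightarrow> 'a bvec \<Rightarrow> real" where
  "bform T p v = - (\<Sum>K\<in>T. vint K (\<lambda>x. p K x * vdiv (v K) x))"

definition cform :: "'a::euclidean_space set set \<Rightarrow> real \<Rightarrow> 'a bscal \<Rightarrow> 'a bscal \<Rightarrow> real" where
  "cform T lam p q = - (1 / lam) * (\<Sum>K\<in>T. vint K (\<lambda>x. p K x * q K x))"

definition rhs :: "'a::euclidean_space set set \<Rightarrow> ('a \<Rightarrow> 'a) \<Rightarrow> 'a bvec \<Rightarrow> real" where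
  "rhs T f v = (\<Sum>K\<in>T. vint K (\<lambda>x. f x \<bullet> v K x))"

definition L2vec :: "'a::euclidean_space set \<Rightarrow> ('a \<Rightarrow> 'a) \<Rightarrow> bool" where
  "L2vec \<Omega> f \<longleftrightarrow> f \<in> borel_measurable (restrict_space lborel \<Omega>) \<and>
                    set_integrable lborel \<Omega> (\<lambda>x. (norm (f x))^2)"

end

theory Submission
  imports Defs
begin

text \<open>Test the second equation with q = div vo, which lies in Q_h^{k-1,o}. Functions
  with zero mean on every element are L2-orthogonal to piecewise constants, so in
  b(q, u) = -(q, div ud + div uo) and c(p, q) = -(pbar + po, q) / lam the piecewise constant
  parts div ud and pbar drop out, leaving -(div vo, div uo) + b(po, vo) / lam = 0.\<close>

lemma poly_fun_has_derivative:
  assumes "poly_fun m f"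
  shows "\<exists>D. (\<forall>x. (f has_derivative D x) (at x)) \<and> (\<forall>h. continuous_on UNIV (\<lambda>x. D x h))"
proof -
  obtain c where c: "f = (\<lambda>x. \<Sum>\<alpha>\<in>mindex m. c \<alpha> * (\<Prod>b\<in>Basis. (x \<bullet> b) ^ \<alpha> b))"
    using assms unfolding poly_fun_def by blast
  define D where "D x h = (\<Sum>\<alpha>\<in>mindex m. c \<alpha> * (\<Sum>b\<in>Basis.
      (of_nat (\<alpha> b) * (x \<bullet> b) ^ (\<alpha> b - 1) * (h \<bullet> b)) * (\<Prod>j\<in>Basis - {b}. (x \<bullet> j) ^ \<alpha> j)))"
    for x h
  have monomial: "((\<lambda>x. (x \<bullet> b) ^ n) has_derivative (\<lambda>y. real n * (x \<bullet> b) ^ (n - 1) * (y \<bullet> b))) (at x)"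
    for x b n
    by (rule has_derivative_eq_rhs, (rule derivative_eq_intros)+, auto)
  have "(f has_derivative D x) (at x)" for x
    unfolding c D_def
    by (intro monomial has_derivative_sum has_derivative_mult_right has_derivative_prod
        has_derivative_power bounded_linear_imp_has_derivative bounded_linear_inner_left)
  moreover have "continuous_on UNIV (\<lambda>x. D x h)" for h
    unfolding D_def by (intro continuous_intros)
  ultimately show ?thesis by blast
qed

lemma poly_fun_continuous_on: "poly_fun m f \<Longrightarrow> continuous_on S f"
  by (meson poly_fun_has_derivative continuous_at_imp_continuous_on has_derivative_continuous)

lemma mindex_0: "mindex 0 = {(\<lambda>_. 0) :: 'a::euclidean_space \<Rightarrow> nat}"
proof (rule set_eqI)
  fix \<alpha> :: "'a \<Rightarrow> nat"
  show "\<alpha> \<in> mindex 0 \<longleftrightarrow> \<alpha> \<in> {\<lambda>_. 0}"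
  proof
    assume \<alpha>: "\<alpha> \<in> mindex 0"
    then have "\<forall>b\<in>Basis. \<alpha> b = 0" unfolding mindex_def by auto
    with \<alpha> show "\<alpha> \<in> {\<lambda>_. 0}" unfolding mindex_def by (auto intro!: ext)
  qed (auto simp: mindex_def)
qed

lemma poly_fun_0_constant: "poly_fun 0 (f :: 'a::euclidean_space \<Rightarrow> real) \<Longrightarrow> f x = f y"
  unfolding poly_fun_def mindex_0 by auto

lemma vpoly_has_derivative:
  fixes v :: "'a::euclidean_space \<Rightarrow> 'a"
  assumes "vpoly m v"
  shows "\<exists>D. (\<forall>x. (v has_derivative (\<lambda>h. \<Sum>b\<in>Basis. D b x h *\<^sub>R b)) (at x)) \<and>
             (\<forall>b\<in>Basis. \<forall>h. continuous_on UNIV (\<lambda>x. D b x h))"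
proof -
  have "\<forall>b\<in>Basis. \<exists>D. (\<forall>x. ((\<lambda>x. v x \<bullet> b) has_derivative D x) (at x)) \<and>
                     (\<forall>h. continuous_on UNIV (\<lambda>x. D x h))"
    using assms poly_fun_has_derivative unfolding vpoly_def by blast
  then obtain D where D: "\<And>b x. b \<in> Basis \<Longrightarrow> ((\<lambda>x. v x \<bullet> b) has_derivative D b x) (at x)"
    "\<And>b h. b \<in> Basis \<Longrightarrow> continuous_on UNIV (\<lambda>x. D b x h)"
    by metis
  have v: "v = (\<lambda>x. \<Sum>b\<in>Basis. (v x \<bullet> b) *\<^sub>R b)"
    by (simp add: euclidean_representation)
  have "(v has_derivative (\<lambda>h. \<Sum>b\<in>Basis. D b x h *\<^sub>R b)) (at x)" for x
    by (subst v, intro has_derivative_sum has_derivative_scaleR_left D)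
  with D(2) show ?thesis by blast
qed

lemma vpoly_differentiable: "vpoly m v \<Longrightarrow> v differentiable (at x)"
  using vpoly_has_derivative unfolding differentiable_def by blast

lemma vpoly_continuous_on_vdiv:
  fixes v :: "'a::euclidean_space \<Rightarrow> 'a"
  assumes "vpoly m v"
  shows "continuous_on UNIV (vdiv v)"
proof -
  obtain D where D: "\<And>x. (v has_derivative (\<lambda>h. \<Sum>b\<in>Basis. D b x h *\<^sub>R b)) (at x)"
    "\<And>b h. b \<in> Basis \<Longrightarrow> continuous_on UNIV (\<lambda>x. D b x h)"
    using vpoly_has_derivative[OF assms] by blast
  have "vdiv v x = (\<Sum>b\<in>Basis. D b x b)" for x
    unfolding vdiv_def vgrad_def frechet_derivative_at[OF D(1), symmetric]
    by (intro sum.cong refl inner_sum_left_Basis)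
  then have "vdiv v = (\<lambda>x. \<Sum>b\<in>Basis. D b x b)" by auto
  then show ?thesis by (simp add: D(2) continuous_on_sum)
qed

lemma vdiv_add_on_closure_interior:
  fixes u v w :: "'a::euclidean_space \<Rightarrow> 'a"
  assumes diff: "\<And>x. v differentiable (at x)" "\<And>x. w differentiable (at x)"
    and cont: "continuous_on UNIV (vdiv u)" "continuous_on UNIV (vdiv v)" "continuous_on UNIV (vdiv w)"
    and eq: "\<And>y. y \<in> S \<Longrightarrow> u y = v y + w y"
    and x: "x \<in> closure (interior S)"
  shows "vdiv u x = vdiv v x + vdiv w x"
proof -
  have "vdiv u z = vdiv v z + vdiv w z" if z: "z \<in> interior S" for z
  proof -
    let ?D = "\<lambda>h. frechet_derivative v (at z) h + frechet_derivative w (at z) h"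
    have "((\<lambda>y. v y + w y) has_derivative ?D) (at z)"
      using diff frechet_derivative_works has_derivative_add by blast
    then have "(u has_derivative ?D) (at z)"
      by (rule has_derivative_transform_within_open[OF _ open_interior z])
         (use eq interior_subset in force)
    then have "frechet_derivative u (at z) = ?D"
      by (rule frechet_derivative_at[symmetric])
    then show ?thesis unfolding vdiv_def vgrad_def by (simp add: inner_add_left sum.distrib)
  qed
  moreover have "closed {z. vdiv u z = vdiv v z + vdiv w z}"
    using cont by (intro closed_Collect_eq continuous_intros) (auto intro: continuous_on_subset)
  ultimately have "closure (interior S) \<subseteq> {z. vdiv u z = vdiv v z + vdiv w z}"
    by (intro closure_minimal) auto
  with x show ?thesis by auto
qed

lemma closure_interior_full_simplex:
  fixes K :: "'a::euclidean_space set"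
  assumes "int DIM('a) simplex K"
  shows "closure (interior K) = K"
proof -
  have "aff_dim K = int DIM('a)" using assms by (rule aff_dim_simplex)
  then have "K \<noteq> {}" and "interior K = rel_interior K"
    by (auto simp: interior_rel_interior_gen)
  with convex_simplex[OF assms] have "interior K \<noteq> {}"
    by (simp add: rel_interior_eq_empty)
  then show ?thesis
    using assms by (simp add: convex_closure_interior convex_simplex closed_simplex)
qed

lemma set_integral_mult_add_const_mean_zero:
  fixes f g h :: "'a::euclidean_space \<Rightarrow> real"
  assumes K: "compact K" and cont: "continuous_on K g" "continuous_on K f"
    and mean: "vint K g = 0"
    and h: "\<And>x. x \<in> K \<Longrightarrow> h x = c + f x"
  shows "vint K (\<lambda>x. g x * h x) = vint K (\<lambda>x. g x * f x)"
proof -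
  have Ks: "K \<in> sets lborel" using K by (simp add: compact_imp_closed)
  have int: "set_integrable lborel K (\<lambda>x. c * g x)" "set_integrable lborel K (\<lambda>x. g x * f x)"
    unfolding set_integrable_def by (intro borel_integrable_compact K continuous_intros cont)+
  have "vint K (\<lambda>x. g x * h x) = vint K (\<lambda>x. c * g x + g x * f x)"
    by (rule set_lebesgue_integral_cong[OF Ks]) (simp add: h algebra_simps)
  also have "\<dots> = vint K (\<lambda>x. c * g x) + vint K (\<lambda>x. g x * f x)"
    using int by (rule set_integral_add(2))
  also have "vint K (\<lambda>x. c * g x) = 0"
    using mean by simp
  finally show ?thesis by simp
qed

definition inner_T :: "'a::euclidean_space set set \<Rightarrow> 'a bscal \<Rightarrow> 'a bscal \<Rightarrow> real" where
  "inner_T T p q = (\<Sum>K\<in>T. vint K (\<lambda>x. p K x * q K x))"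

lemma inner_T_commute: "inner_T T p q = inner_T T q p"
  unfolding inner_T_def by (simp add: mult.commute)

lemma bform_eq_inner_T: "bform T p v = - inner_T T p (\<lambda>K. vdiv (v K))"
  unfolding bform_def inner_T_def ..

lemma cform_eq_inner_T: "cform T lam p q = - (1 / lam) * inner_T T p q"
  unfolding cform_def inner_T_def ..

lemma inner_T_Qho_add_piecewise_constant:
  assumes mesh: "conforming_triangulation T \<Omega>"
    and q: "q \<in> Qho T m" and c: "c \<in> Qh T 0" and r: "r \<in> Qh T m'"
    and p: "eqT T p (\<lambda>K x. c K x + r K x)"
  shows "inner_T T q p = inner_T T q r"
  unfolding inner_T_def
proof (rule sum.cong[OF refl])
  fix K assume K: "K \<in> T"
  have "compact K"
    using mesh K compact_simplex unfolding conforming_triangulation_def by blast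
  moreover have "p K x = c K 0 + r K x" if "x \<in> K" for x
    using p K c that poly_fun_0_constant[of "c K" x 0] unfolding eqT_def Qh_def by simp
  ultimately show "vint K (\<lambda>x. q K x * p K x) = vint K (\<lambda>x. q K x * r K x)"
    using q r K unfolding Qho_def Qh_def
    by (intro set_integral_mult_add_const_mean_zero) (auto intro: poly_fun_continuous_on)
qed

lemma eqT_vdiv_add:
  assumes mesh: "conforming_triangulation T \<Omega>"
    and "u \<in> Vh T k" "v \<in> Vh T k" "w \<in> Vh T k"
    and eq: "eqT T u (\<lambda>K x. v K x + w K x)"
  shows "eqT T (\<lambda>K. vdiv (u K)) (\<lambda>K x. vdiv (v K) x + vdiv (w K) x)"
  unfolding eqT_def
proof (intro ballI)
  fix K x assume K: "K \<in> T" and x: "x \<in> K"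
  have "vpoly k (u K)" "vpoly k (v K)" "vpoly k (w K)"
    using assms K unfolding Vh_def by auto
  moreover have "closure (interior K) = K"
    using mesh K closure_interior_full_simplex unfolding conforming_triangulation_def by blast
  ultimately show "vdiv (u K) x = vdiv (v K) x + vdiv (w K) x"
    using eq K x unfolding eqT_def
    by (intro vdiv_add_on_closure_interior[where S = K] vpoly_differentiable
        vpoly_continuous_on_vdiv) auto
qed

theorem lemma2p1:
  fixes \<Omega> :: "'a::euclidean_space set" and T :: "'a set set"
    and k :: nat and \<mu> lam \<tau> \<alpha> :: real
    and f :: "'a \<Rightarrow> 'a"
    and Vd :: "'a bvec set"
    and u uh ud uo :: "'a bvec" and p pbar po :: "'a bscal"
  assumes dom: "convex_polytopal_domain \<Omega>"
    and mesh: "conforming_triangulation T \<Omega>"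
    and params: "\<mu> > 0" "lam > 0" "\<tau> \<ge> 0" "\<alpha> > 0"
    and k: "k \<ge> 1"
    and f: "L2vec \<Omega> f"
    and split: "hier_split T k Vd"
    and sol_u: "u \<in> Vh0 T \<Omega> k" "uh \<in> hatVh0 T \<Omega> (k - 1)"
    and sol_p: "p \<in> Qh0 T (k - 1)"
    and eq1: "\<forall>v\<in>Vh0 T \<Omega> k. \<forall>vh\<in>hatVh0 T \<Omega> (k - 1).
               aform T k \<tau> \<mu> \<alpha> (u, uh) (v, vh) + bform T p v = rhs T f v"
    and eq2: "\<forall>q\<in>Qh0 T (k - 1). bform T q u + cform T lam p q = 0"
    and dec_u: "ud \<in> Vh0d T \<Omega> k Vd" "uo \<in> Vho T k" "eqT T u (\<lambda>K x. ud K x + uo K x)"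
    and dec_p: "pbar \<in> Qh T 0" "po \<in> Qho T (k - 1)" "eqT T p (\<lambda>K x. pbar K x + po K x)"
  shows "\<forall>vo\<in>Vho T k.
           bform T po vo = lam * (\<Sum>K\<in>T. vint K (\<lambda>x. vdiv (uo K) x * vdiv (vo K) x))"
proof
  fix vo assume vo: "vo \<in> Vho T k"
  define q where "q = (\<lambda>K. vdiv (vo K))"
  have q: "q \<in> Qho T (k - 1)" and div_uo: "(\<lambda>K. vdiv (uo K)) \<in> Qho T (k - 1)"
    and div_ud: "(\<lambda>K. vdiv (ud K)) \<in> Qh T 0"
    using split vo dec_u(1,2) unfolding hier_split_def Vh0d_def q_def by auto
  have "bform T q u + cform T lam p q = 0"
    using eq2 q unfolding Qho_def Qh0_def by simp
  moreover have "bform T q u = - inner_T T q (\<lambda>K. vdiv (uo K))"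
  proof -
    have "eqT T (\<lambda>K. vdiv (u K)) (\<lambda>K x. vdiv (ud K) x + vdiv (uo K) x)"
      using sol_u(1) dec_u unfolding Vh0d_def Vh0_def Vho_def
      by (intro eqT_vdiv_add[OF mesh]) auto
    then have "inner_T T q (\<lambda>K. vdiv (u K)) = inner_T T q (\<lambda>K. vdiv (uo K))"
      using div_uo unfolding Qho_def
      by (intro inner_T_Qho_add_piecewise_constant[OF mesh q div_ud]) auto
    then show ?thesis unfolding bform_eq_inner_T by simp
  qed
  moreover have "cform T lam p q = (1 / lam) * bform T po vo"
  proof -
    have "po \<in> Qh T (k - 1)" using dec_p(2) unfolding Qho_def by simp
    then have "inner_T T q p = inner_T T q po"
      by (rule inner_T_Qho_add_piecewise_constant[OF mesh q dec_p(1) _ dec_p(3)])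
    then show ?thesis
      unfolding cform_eq_inner_T bform_eq_inner_T q_def by (simp add: inner_T_commute)
  qed
  ultimately have "bform T po vo = lam * inner_T T (\<lambda>K. vdiv (uo K)) q"
    using params(2) by (simp add: inner_T_commute field_simps)
  then show "bform T po vo = lam * (\<Sum>K\<in>T. vint K (\<lambda>x. vdiv (uo K) x * vdiv (vo K) x))"
    unfolding inner_T_def q_def .
qed

end
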